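(* Let $n$ be a non-negative integer. Then every subgroup of $\mathbb{R}^n$, equipped with the subspace topology inherited from the Euclidean topology, is $g$-reversible.
   Context: All topological groups are assumed Hausdorff. A topological group $G$ is called $g$-reversible if every continuous automorphism of $G$ (i.e. every continuous group isomorphism of $G$ onto itself) is an open map. $\mathbb{R}^n$ denotes the additive group with the Euclidean topology. *)

theory Defs
  imports "HOL-Analysis.Analysis"
begin

definition add_subgroup :: "'a::ab_group_add set \<Rightarrow> bool" where
  "add_subgroup H \<longleftrightarrow> 0 \<in> H \<and> (\<forall>x\<in>H. \<forall>y\<in>H. x + y \<in> H) \<and> (\<forall>x\<in>H. - x \<in> H)"

definition cont_automorphism :: "'a::{ab_group_add,topological_space} set \<Rightarrow> ('a \<Rightarrow> 'a) \<Rightarrow> bool" where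
  "cont_automorphism H f \<longleftrightarrow>
     bij_betw f H H \<and> (\<forall>x\<in>H. \<forall>y\<in>H. f (x + y) = f x + f y) \<and>
     continuous_map (top_of_set H) (top_of_set H) f"

definition g_reversible :: "'a::{ab_group_add,topological_space} set \<Rightarrow> bool" where
  "g_reversible H \<longleftrightarrow>
     (\<forall>f. cont_automorphism H f \<longrightarrow> open_map (top_of_set H) (top_of_set H) f)"

end

theory Submission
  imports Defs
begin

text \<open>Choose a maximal linearly independent subset B of the subgroup H and extend a continuous
  automorphism f on B to a linear map T. Then g = f - T is additive, continuous and vanishes on
  the subgroup generated by B. For h \<in> H the multiples m h stay within bounded distance of that
  lattice, so the remainders r m \<in> H form a bounded sequence with g (r m) = m g h; two of them are
  close, and continuity of g at 0 forces g h = 0. Hence f is the restriction of a linear map T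
  mapping span H onto itself, so T is injective there and bounded below, which makes the inverse
  of f Lipschitz and f open.\<close>

definition additive_on :: "'a::ab_group_add set \<Rightarrow> ('a \<Rightarrow> 'b::ab_group_add) \<Rightarrow> bool" where
  "additive_on H f \<longleftrightarrow> (\<forall>x\<in>H. \<forall>y\<in>H. f (x + y) = f x + f y)"

lemma add_subgroup_0: "add_subgroup H \<Longrightarrow> 0 \<in> H"
  by (simp add: add_subgroup_def)

lemma add_subgroup_add: "add_subgroup H \<Longrightarrow> x \<in> H \<Longrightarrow> y \<in> H \<Longrightarrow> x + y \<in> H"
  by (simp add: add_subgroup_def)

lemma add_subgroup_diff: "add_subgroup H \<Longrightarrow> x \<in> H \<Longrightarrow> y \<in> H \<Longrightarrow> x - y \<in> H"
  unfolding add_subgroup_def by (metis diff_conv_add_uminus)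

lemma add_subgroup_sum:
  assumes "add_subgroup H" "finite A" "\<And>a. a \<in> A \<Longrightarrow> x a \<in> H"
  shows "(\<Sum>a\<in>A. x a) \<in> H"
  using assms(2,3) by induction (auto intro: add_subgroup_0 add_subgroup_add assms(1))

lemma add_subgroup_scaleR_of_int:
  fixes x :: "'a::real_vector"
  assumes H: "add_subgroup H" and x: "x \<in> H"
  shows "of_int k *\<^sub>R x \<in> H"
proof (induction k rule: int_induct[where k = 0])
  case base show ?case using add_subgroup_0[OF H] by simp
next
  case (step1 i)
  then show ?case using add_subgroup_add[OF H _ x] by (simp add: scaleR_left_distrib)
next
  case (step2 i)
  then show ?case using add_subgroup_diff[OF H _ x] by (simp add: scaleR_left_diff_distrib)
qed

lemma additive_on_0:
  assumes "add_subgroup H" "additive_on H f"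
  shows "f 0 = 0"
  using assms add_subgroup_0[OF assms(1)] unfolding additive_on_def by (metis add.right_neutral add_left_cancel)

lemma additive_on_diff:
  assumes H: "add_subgroup H" and f: "additive_on H f" and "x \<in> H" "y \<in> H"
  shows "f (x - y) = f x - f y"
proof -
  have "f x = f ((x - y) + y)" by simp
  also have "\<dots> = f (x - y) + f y"
    using f add_subgroup_diff[OF H] assms(3,4) unfolding additive_on_def by blast
  finally show ?thesis by (simp add: algebra_simps)
qed

lemma additive_on_sum:
  assumes H: "add_subgroup H" and f: "additive_on H f"
    and "finite A" "\<And>a. a \<in> A \<Longrightarrow> x a \<in> H"
  shows "f (\<Sum>a\<in>A. x a) = (\<Sum>a\<in>A. f (x a))"
  using assms(3,4)
proof induction
  case empty show ?case using additive_on_0[OF H f] by simp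
next
  case (insert a A)
  then show ?case
    using f add_subgroup_sum[OF H insert.hyps(1)] unfolding additive_on_def by simp
qed

lemma additive_on_scaleR_of_int:
  fixes f :: "'a::real_vector \<Rightarrow> 'b::real_vector"
  assumes H: "add_subgroup H" and f: "additive_on H f" and x: "x \<in> H"
  shows "f (of_int k *\<^sub>R x) = of_int k *\<^sub>R f x"
proof (induction k rule: int_induct[where k = 0])
  case base show ?case using additive_on_0[OF H f] by simp
next
  case (step1 i)
  have "f (of_int (i + 1) *\<^sub>R x) = f (of_int i *\<^sub>R x) + f x"
    using f add_subgroup_scaleR_of_int[OF H x] x unfolding additive_on_def
    by (simp add: scaleR_left_distrib)
  then show ?case using step1 by (simp add: scaleR_left_distrib)
next
  case (step2 i)
  have "f (of_int (i - 1) *\<^sub>R x) = f (of_int i *\<^sub>R x) - f x"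
    using additive_on_diff[OF H f add_subgroup_scaleR_of_int[OF H x] x]
    by (simp add: scaleR_left_diff_distrib)
  then show ?case using step2 by (simp add: scaleR_left_diff_distrib)
qed

lemma additive_on_linear_growth_bounded_imp_0:
  fixes g :: "'a::{real_normed_vector,heine_borel} \<Rightarrow> 'b::real_normed_vector"
  assumes H: "add_subgroup H" and g: "additive_on H g" "continuous_on H g"
    and r: "range r \<subseteq> H" "bounded (range r)" "\<And>m. g (r m) = real m *\<^sub>R c"
  shows "c = 0"
proof (rule ccontr)
  assume "c \<noteq> 0"
  then obtain d where "d > 0" and d: "\<And>x. x \<in> H \<Longrightarrow> dist x 0 < d \<Longrightarrow> norm (g x) < norm c"
  proof -
    have "\<exists>d>0. \<forall>x\<in>H. dist x 0 < d \<longrightarrow> dist (g x) (g 0) < norm c"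
      using g(2) add_subgroup_0[OF H] \<open>c \<noteq> 0\<close> zero_less_norm_iff
      unfolding continuous_on_iff by blast
    then show ?thesis using that additive_on_0[OF H g(1)] by auto
  qed
  obtain l \<sigma> where "strict_mono (\<sigma>::nat \<Rightarrow> nat)" "(r \<circ> \<sigma>) \<longlonglongrightarrow> l"
    using bounded_imp_convergent_subsequence[OF r(2)] by blast
  then have "Cauchy (r \<circ> \<sigma>)" using LIMSEQ_imp_Cauchy by blast
  then obtain M where "\<forall>m\<ge>M. \<forall>n\<ge>M. dist ((r \<circ> \<sigma>) m) ((r \<circ> \<sigma>) n) < d"
    using \<open>d > 0\<close> unfolding Cauchy_def by blast
  then have M: "dist (r (\<sigma> (Suc M))) (r (\<sigma> M)) < d" by simp
  define i j where "i = \<sigma> M" and "j = \<sigma> (Suc M)"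
  have "i < j" using \<open>strict_mono \<sigma>\<close> unfolding i_def j_def by (simp add: strict_mono_def)
  have "g (r j - r i) = (real j - real i) *\<^sub>R c"
    using additive_on_diff[OF H g(1), of "r j" "r i"] r(1,3) by (auto simp: scaleR_left_diff_distrib)
  moreover have "norm (g (r j - r i)) < norm c"
    using d[of "r j - r i"] M add_subgroup_diff[OF H, of "r j" "r i"] r(1) unfolding i_def j_def
    by (auto simp: dist_norm)
  ultimately have "\<bar>real j - real i\<bar> * norm c < 1 * norm c" by simp
  then have "\<bar>real j - real i\<bar> < 1" using mult_right_less_imp_less norm_ge_zero by blast
  then show False using \<open>i < j\<close> by linarith
qed

lemma bounded_lattice_remainders:
  fixes h :: "'a::real_normed_vector"
  assumes B: "finite B" and h: "h \<in> span B"
  obtains k where "bounded (range (\<lambda>m. real m *\<^sub>R h - (\<Sum>b\<in>B. of_int (k m b) *\<^sub>R b)))"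
proof -
  obtain u where u: "h = (\<Sum>b\<in>B. u b *\<^sub>R b)" using h span_finite[OF B] by blast
  define k where "k m b = \<lfloor>real m * u b\<rfloor>" for m b
  have "norm (real m *\<^sub>R h - (\<Sum>b\<in>B. of_int (k m b) *\<^sub>R b)) \<le> (\<Sum>b\<in>B. norm b)" for m
  proof -
    have "real m *\<^sub>R h - (\<Sum>b\<in>B. of_int (k m b) *\<^sub>R b) = (\<Sum>b\<in>B. frac (real m * u b) *\<^sub>R b)"
      unfolding u k_def frac_def scaleR_sum_right
      by (simp add: sum_subtractf[symmetric] scaleR_diff_left)
    also have "norm \<dots> \<le> (\<Sum>b\<in>B. norm (frac (real m * u b) *\<^sub>R b))" by (rule norm_sum)
    also have "\<dots> \<le> (\<Sum>b\<in>B. norm b)"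
      by (intro sum_mono) (simp add: frac_lt_1 less_imp_le mult_left_le_one_le)
    finally show ?thesis .
  qed
  then have "bounded (range (\<lambda>m. real m *\<^sub>R h - (\<Sum>b\<in>B. of_int (k m b) *\<^sub>R b)))"
    unfolding bounded_iff by blast
  then show ?thesis by (rule that)
qed

lemma additive_on_vanishing_on_spanning_set:
  fixes g :: "'a::{real_normed_vector,heine_borel} \<Rightarrow> 'b::real_normed_vector"
  assumes H: "add_subgroup H" and g: "additive_on H g" "continuous_on H g"
    and B: "finite B" "B \<subseteq> H" "H \<subseteq> span B" and g0: "\<And>b. b \<in> B \<Longrightarrow> g b = 0"
    and h: "h \<in> H"
  shows "g h = 0"
proof -
  obtain k where k: "bounded (range (\<lambda>m. real m *\<^sub>R h - (\<Sum>b\<in>B. of_int (k m b) *\<^sub>R b)))"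
    using bounded_lattice_remainders[OF B(1)] h B(3) by blast
  define lattice where "lattice m = (\<Sum>b\<in>B. of_int (k m b) *\<^sub>R b)" for m
  have lattice: "lattice m \<in> H" "g (lattice m) = 0" for m
    using add_subgroup_sum[OF H B(1)] additive_on_sum[OF H g(1) B(1)]
      add_subgroup_scaleR_of_int[OF H] additive_on_scaleR_of_int[OF H g(1)] B(2) g0
    unfolding lattice_def by (auto simp: subsetD)
  have multiple: "real m *\<^sub>R h \<in> H" "g (real m *\<^sub>R h) = real m *\<^sub>R g h" for m
    using add_subgroup_scaleR_of_int[OF H h, of "int m"] additive_on_scaleR_of_int[OF H g(1) h, of "int m"]
    by simp_all
  show ?thesis
  proof (rule additive_on_linear_growth_bounded_imp_0[OF H g])
    show "range (\<lambda>m. real m *\<^sub>R h - lattice m) \<subseteq> H"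
      using add_subgroup_diff[OF H multiple(1) lattice(1)] by blast
    show "bounded (range (\<lambda>m. real m *\<^sub>R h - lattice m))" using k unfolding lattice_def .
    show "g (real m *\<^sub>R h - lattice m) = real m *\<^sub>R g h" for m
      using additive_on_diff[OF H g(1) multiple(1) lattice(1)] multiple(2) lattice(2) by simp
  qed
qed

lemma additive_on_continuous_imp_linear_on_subgroup:
  fixes f :: "'a::euclidean_space \<Rightarrow> 'b::real_normed_vector"
  assumes H: "add_subgroup H" and f: "additive_on H f" "continuous_on H f"
  obtains T where "linear T" "\<And>x. x \<in> H \<Longrightarrow> f x = T x"
proof -
  obtain B where B: "B \<subseteq> H" "independent B" "H \<subseteq> span B"
    by (rule maximal_independent_subset)
  obtain T where T: "linear T" "\<And>x. x \<in> B \<Longrightarrow> T x = f x"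
    using linear_independent_extend[OF B(2), of f] by auto
  have add: "additive_on H (\<lambda>x. f x - T x)"
    using f(1) linear_add[OF T(1)] unfolding additive_on_def by (simp add: algebra_simps)
  have cont: "continuous_on H (\<lambda>x. f x - T x)"
    using T(1) by (intro continuous_on_diff[OF f(2)] linear_continuous_on)
      (simp add: linear_conv_bounded_linear)
  have "f x - T x = 0" if "x \<in> H" for x
    by (rule additive_on_vanishing_on_spanning_set[OF H add cont finiteI_independent[OF B(2)] B(1,3) _ that])
      (simp add: T(2))
  then show ?thesis using that T(1) by simp
qed

lemma linear_inj_on_subspace_if_surj_on:
  fixes T :: "'a::euclidean_space \<Rightarrow> 'a"
  assumes T: "linear T" and S: "subspace S" "T ` S = S"
  shows "inj_on T S"
proof -
  obtain B where B: "B \<subseteq> S" "independent B" "S \<subseteq> span B" "card B = dim S"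
    using basis_exists by blast
  have "finite B" using B(2) by (rule finiteI_independent)
  have spanB: "span B = S" using B(1,3) S(1) by (rule span_subspace)
  have spanTB: "span (T ` B) = S"
    using linear_span_image[OF T, of B] S(2) unfolding spanB by (rule trans)
  have "independent (T ` B)"
  proof (rule card_le_dim_spanning[of "T ` B" S])
    show "T ` B \<subseteq> S" using span_superset[of "T ` B"] unfolding spanTB .
    show "S \<subseteq> span (T ` B)" using spanTB by simp
    show "finite (T ` B)" using \<open>finite B\<close> by simp
    show "card (T ` B) \<le> dim S" using card_image_le[OF \<open>finite B\<close>] B(4) by simp
  qed
  then have "card (T ` B) = dim (span (T ` B))" by (rule dim_span_eq_card_independent[symmetric])
  also have "\<dots> = dim (span B)" unfolding spanTB spanB ..
  also have "\<dots> = card B" using B(2) by (rule dim_span_eq_card_independent)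
  finally have "card (T ` B) = card B" .
  then have "inj_on T B" using inj_on_iff_eq_card[OF \<open>finite B\<close>] by blast
  then show ?thesis
    using linear_inj_on_span_independent_image[OF T \<open>independent (T ` B)\<close>] spanB by simp
qed

lemma linear_surj_on_subspace_imp_bounded_below:
  fixes T :: "'a::euclidean_space \<Rightarrow> 'a"
  assumes T: "linear T" and S: "subspace S" "T ` S = S"
  obtains e where "e > 0" "\<And>x. x \<in> S \<Longrightarrow> e * norm x \<le> norm (T x)"
proof -
  have "\<forall>x\<in>S. T x = 0 \<longrightarrow> x = 0"
    using linear_inj_on_subspace_if_surj_on[OF assms] linear_0[OF T] subspace_0[OF S(1)]
    unfolding inj_on_def by metis
  then show ?thesis
    using injective_imp_isometric[OF closed_subspace[OF S(1)] S(1)] T that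
    unfolding linear_conv_bounded_linear by blast
qed

lemma expanding_bij_imp_open_map:
  fixes f :: "'a::metric_space \<Rightarrow> 'b::metric_space"
  assumes f: "bij_betw f S T" "continuous_on S f"
    and e: "e > 0" "\<And>x y. x \<in> S \<Longrightarrow> y \<in> S \<Longrightarrow> e * dist x y \<le> dist (f x) (f y)"
  shows "open_map (top_of_set S) (top_of_set T) f"
proof -
  define g where "g = inv_into S f"
  have g: "\<And>y. y \<in> T \<Longrightarrow> g y \<in> S" "\<And>y. y \<in> T \<Longrightarrow> f (g y) = y"
    "\<And>x. x \<in> S \<Longrightarrow> g (f x) = x"
    using bij_betwE[OF bij_betw_inv_into[OF f(1)]] bij_betw_inv_into_right[OF f(1)]
      bij_betw_inv_into_left[OF f(1)]
    unfolding g_def by simp_all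
  have "(1 / e)-lipschitz_on T g"
  proof (rule lipschitz_onI)
    fix y y' assume "y \<in> T" "y' \<in> T"
    then have "e * dist (g y) (g y') \<le> dist y y'" using e(2) g(1,2) by metis
    then show "dist (g y) (g y') \<le> 1 / e * dist y y'" using e(1) by (simp add: field_simps)
  qed (use e(1) in simp)
  then have "homeomorphism S T f g"
  proof (intro homeomorphismI)
    show "continuous_on T g" if "(1 / e)-lipschitz_on T g"
      using that by (rule lipschitz_on_continuous_on)
    show "f ` S \<subseteq> T" using f(1) by (simp add: bij_betw_imp_surj_on)
  qed (use f(2) g in auto)
  then show ?thesis unfolding open_map_def using homeomorphism_imp_open_map by blast
qed

theorem theorem5p6:
  fixes H :: "'a::euclidean_space set"
  assumes "add_subgroup H"
  shows "g_reversible H"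
  unfolding g_reversible_def cont_automorphism_def additive_on_def[symmetric]
proof (intro allI impI, elim conjE)
  fix f assume bij: "bij_betw f H H" and f: "additive_on H f"
    and "continuous_map (top_of_set H) (top_of_set H) f"
  then have cont: "continuous_on H f" by simp
  obtain T where T: "linear T" "\<And>x. x \<in> H \<Longrightarrow> f x = T x"
    using additive_on_continuous_imp_linear_on_subgroup[OF assms f cont] by blast
  have "T ` H = f ` H" using T(2) by (rule image_cong[OF refl, symmetric])
  also have "\<dots> = H" using bij by (rule bij_betw_imp_surj_on)
  finally have "T ` H = H" .
  then have "T ` span H = span H" using linear_span_image[OF T(1), of H] by simp
  then obtain e where e: "e > 0" "\<And>x. x \<in> span H \<Longrightarrow> e * norm x \<le> norm (T x)"
    using linear_surj_on_subspace_imp_bounded_below[OF T(1) subspace_span] by blast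
  have "e * dist x y \<le> dist (f x) (f y)" if "x \<in> H" "y \<in> H" for x y
  proof -
    have "x - y \<in> span H" using that by (simp add: span_diff span_base)
    then have "e * norm (x - y) \<le> norm (T (x - y))" by (rule e(2))
    then show ?thesis using that T(2) linear_diff[OF T(1)] by (simp add: dist_norm)
  qed
  then show "open_map (top_of_set H) (top_of_set H) f"
    by (rule expanding_bij_imp_open_map[OF bij cont e(1)])
qed

end
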